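(* Let $\pi_0,\pi_1 : E\rightrightarrows V$ be a connected graph, and suppose $V \simeq V_0 + V_1$, with elements $v_0 : V_0$ and $v_1 : V_1$. Then there merely exists an edge $e : E$ such that either $\pi_0(e)\in V_0$ and $\pi_1(e)\in V_1$, or $\pi_0(e)\in V_1$ and $\pi_1(e)\in V_0$.
   Context: Work in homotopy type theory. A graph is a pair of types $V,E$ with maps $\pi_0,\pi_1:E\to V$; its coequalizer $V/E$ is the higher inductive type with points $[v]$ ($v:V$) and paths $[\pi_0(e)]=[\pi_1(e)]$ ($e:E$). The graph is connected if $V/E$ is a connected type (merely inhabited, and any two points merely equal). For $w : V$, "$w\in V_0$" means that $w$ corresponds under the equivalence $V\simeq V_0+V_1$ to an element of the form $\mathsf{inl}(\cdot)$, and similarly for $V_1$ with $\mathsf{inr}$. *)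

theory Defs
  imports Main
begin

definition edge_rel :: "'e set \<Rightarrow> ('e \<Rightarrow> 'v) \<Rightarrow> ('e \<Rightarrow> 'v) \<Rightarrow> ('v \<times> 'v) set" where
  "edge_rel E p0 p1 = {(p0 e, p1 e) | e. e \<in> E} \<union> {(p1 e, p0 e) | e. e \<in> E}"

(* The relation identifying vertices in the (0-truncated) coequalizer V/E:
   the equivalence relation on V generated by the edges. *)
definition coeq_rel :: "'v set \<Rightarrow> 'e set \<Rightarrow> ('e \<Rightarrow> 'v) \<Rightarrow> ('e \<Rightarrow> 'v) \<Rightarrow> ('v \<times> 'v) set" where
  "coeq_rel V E p0 p1 = Id_on V \<union> (edge_rel E p0 p1)\<^sup>+"

(* V/E is connected: merely inhabited, and any two points merely equal. *)
definition graph_connected :: "'v set \<Rightarrow> 'e set \<Rightarrow> ('e \<Rightarrow> 'v) \<Rightarrow> ('e \<Rightarrow> 'v) \<Rightarrow> bool" where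
  "graph_connected V E p0 p1 \<longleftrightarrow>
     V \<noteq> {} \<and> (\<forall>u\<in>V. \<forall>w\<in>V. (u, w) \<in> coeq_rel V E p0 p1)"

end

theory Submission
  imports Defs
begin

text \<open>If no edge crosses the partition, the vertices sent to \<open>V\<^sub>0\<close> form a set closed
  under edges; by connectedness it then contains every vertex, including the preimage of
  \<open>v\<^sub>1\<close>.\<close>

lemma graph_connected_crossing_edge:
  assumes "graph_connected V E p0 p1"
    and "u \<in> V" "w \<in> V" "u \<in> S" "w \<notin> S"
  shows "\<exists>e\<in>E. (p0 e \<in> S) \<noteq> (p1 e \<in> S)"
proof (rule ccontr)
  assume "\<not> ?thesis"
  then have closed: "edge_rel E p0 p1 `` S \<subseteq> S"
    unfolding edge_rel_def by auto
  have "(u, w) \<in> coeq_rel V E p0 p1"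
    using assms(1-3) unfolding graph_connected_def by blast
  moreover have "u \<noteq> w" using assms(4,5) by auto
  ultimately have "(u, w) \<in> (edge_rel E p0 p1)\<^sup>*"
    unfolding coeq_rel_def by auto
  then have "w \<in> (edge_rel E p0 p1)\<^sup>* `` S" using assms(4) by blast
  with closed assms(5) show False by (simp add: Image_closed_trancl)
qed

theorem lemma4p4:
  fixes V :: "'v set" and E :: "'e set" and p0 p1 :: "'e \<Rightarrow> 'v"
    and V0 :: "'a set" and V1 :: "'b set" and f :: "'v \<Rightarrow> 'a + 'b"
    and v0 :: 'a and v1 :: 'b
  assumes "\<forall>e\<in>E. p0 e \<in> V \<and> p1 e \<in> V"
    and "graph_connected V E p0 p1"
    and "bij_betw f V (V0 <+> V1)"
    and "v0 \<in> V0" and "v1 \<in> V1"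
  shows "\<exists>e\<in>E. (f (p0 e) \<in> Inl ` V0 \<and> f (p1 e) \<in> Inr ` V1)
             \<or> (f (p0 e) \<in> Inr ` V1 \<and> f (p1 e) \<in> Inl ` V0)"
proof -
  have image: "f ` V = V0 <+> V1" using assms(3) by (simp add: bij_betw_def)
  obtain u where u: "u \<in> V" "f u = Inl v0" using image assms(4) by (metis InlI imageE)
  obtain w where w: "w \<in> V" "f w = Inr v1" using image assms(5) by (metis InrI imageE)
  let ?S = "{x. f x \<in> Inl ` V0}"
  obtain e where e: "e \<in> E" "(p0 e \<in> ?S) \<noteq> (p1 e \<in> ?S)"
    using graph_connected_crossing_edge[OF assms(2) u(1) w(1), of ?S] u w assms(4) by auto
  have "f x \<in> Inl ` V0 \<or> f x \<in> Inr ` V1" if "x \<in> V" for x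
    using that image by (auto simp: Plus_def)
  then show ?thesis using e assms(1) by blast
qed

end
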